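(* Let $p\ne2$ be a rational prime and let $\mathbf{f}\in H_{1,2,2}$ be primitive to $p$ with $N(\mathbf{f})\equiv0\pmod p$. Then there exists $\widehat{\mathbf{f}}\in H_{1,2,2}$ with $\widehat{\mathbf{f}}-\mathbf{f}\in pH_{1,2,2}$, $N(\widehat{\mathbf{f}})\equiv0\pmod p$ and $N(\widehat{\mathbf{f}})\not\equiv0\pmod{p^2}$.
   Context: Let $\mathbf{i},\mathbf{j},\mathbf{k}$ be the standard quaternion units; $\overline{\mathbf{q}}$ is quaternion conjugation and $N(\mathbf{q})=\mathbf{q}\overline{\mathbf{q}}$. $H_{1,2,2}$ is the subring of the quaternions equal to the $\mathbb{Z}$-module generated by $\mathbf{v}_1=1$, $\mathbf{v}_2=\mathbf{i}$, $\mathbf{v}_3=\tfrac12(1+\mathbf{i}+\sqrt2\,\mathbf{j})$, $\mathbf{v}_4=\tfrac12(1+\mathbf{i}+\sqrt2\,\mathbf{k})$. An element $g_1\mathbf{v}_1+g_2\mathbf{v}_2+g_3\mathbf{v}_3+g_4\mathbf{v}_4$ ($g_i\in\mathbb{Z}$) is primitive to $p$ if $\gcd(g_1,g_2,g_3,g_4,p)=1$. *)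

theory Defs
  imports Complex_Main "HOL-Computational_Algebra.Primes"
begin

datatype quat = Quat (Re: real) (Im1: real) (Im2: real) (Im3: real)

definition qadd :: "quat \<Rightarrow> quat \<Rightarrow> quat" where
  "qadd x y = Quat (Re x + Re y) (Im1 x + Im1 y) (Im2 x + Im2 y) (Im3 x + Im3 y)"

definition qsub :: "quat \<Rightarrow> quat \<Rightarrow> quat" where
  "qsub x y = Quat (Re x - Re y) (Im1 x - Im1 y) (Im2 x - Im2 y) (Im3 x - Im3 y)"

definition qscale :: "real \<Rightarrow> quat \<Rightarrow> quat" where
  "qscale r x = Quat (r * Re x) (r * Im1 x) (r * Im2 x) (r * Im3 x)"

text \<open>Hamilton product (i^2 = j^2 = k^2 = ijk = -1).\<close>
definition qmult :: "quat \<Rightarrow> quat \<Rightarrow> quat" where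
  "qmult x y = Quat
     (Re x * Re y - Im1 x * Im1 y - Im2 x * Im2 y - Im3 x * Im3 y)
     (Re x * Im1 y + Im1 x * Re y + Im2 x * Im3 y - Im3 x * Im2 y)
     (Re x * Im2 y - Im1 x * Im3 y + Im2 x * Re y + Im3 x * Im1 y)
     (Re x * Im3 y + Im1 x * Im2 y - Im2 x * Im1 y + Im3 x * Re y)"

definition qcnj :: "quat \<Rightarrow> quat" where
  "qcnj x = Quat (Re x) (- Im1 x) (- Im2 x) (- Im3 x)"

text \<open>N(q) = q * conj q (a quaternion; it is real, i.e. has zero imaginary part).\<close>
definition qnorm :: "quat \<Rightarrow> quat" where
  "qnorm q = qmult q (qcnj q)"

definition qreal :: "real \<Rightarrow> quat" where
  "qreal r = Quat r 0 0 0"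

definition v1 :: quat where "v1 = Quat 1 0 0 0"
definition v2 :: quat where "v2 = Quat 0 1 0 0"
definition v3 :: quat where "v3 = Quat (1/2) (1/2) (sqrt 2 / 2) 0"
definition v4 :: quat where "v4 = Quat (1/2) (1/2) 0 (sqrt 2 / 2)"

definition hcomb :: "int \<Rightarrow> int \<Rightarrow> int \<Rightarrow> int \<Rightarrow> quat" where
  "hcomb g1 g2 g3 g4 = qadd (qadd (qscale (of_int g1) v1) (qscale (of_int g2) v2))
                            (qadd (qscale (of_int g3) v3) (qscale (of_int g4) v4))"

definition H122 :: "quat set" where
  "H122 = {hcomb g1 g2 g3 g4 | g1 g2 g3 g4. True}"

definition primitive_to :: "int \<Rightarrow> quat \<Rightarrow> bool" where
  "primitive_to p f \<longleftrightarrow> (\<exists>g1 g2 g3 g4. f = hcomb g1 g2 g3 g4 \<and>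
      gcd g1 (gcd g2 (gcd g3 (gcd g4 p))) = 1)"

definition norm_cong0 :: "quat \<Rightarrow> int \<Rightarrow> bool" where
  "norm_cong0 q m \<longleftrightarrow> (\<exists>k::int. qnorm q = qreal (of_int (m * k)))"

end

theory Submission
  imports Defs
begin

text \<open>In the coordinates g1, ..., g4 the norm on H_{1,2,2} is an integral quadratic form Q
whose Gram matrix has determinant a power of 2, so for odd p its polar form B is
nondegenerate modulo p. If p^2 divides Q(f), then Q(f + p x) = Q(f) + p B(f, x) + p^2 Q(x)
is congruent to p B(f, x) modulo p^2, and since f is nonzero modulo p some coordinate
vector x has B(f, x) prime to p; f + p x is then the required lift.\<close>

definition norm_form :: "int \<Rightarrow> int \<Rightarrow> int \<Rightarrow> int \<Rightarrow> int" where
  "norm_form a b c d = a^2 + b^2 + c^2 + d^2 + c*d + (a + b)*(c + d)"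

definition polar_form :: "int \<Rightarrow> int \<Rightarrow> int \<Rightarrow> int \<Rightarrow> int \<Rightarrow> int \<Rightarrow> int \<Rightarrow> int \<Rightarrow> int" where
  "polar_form a b c d x y z w =
     x * (2*a + c + d) + y * (2*b + c + d) + z * (a + b + 2*c + d) + w * (a + b + c + 2*d)"

lemma norm_form_add_smult:
  "norm_form (a + p*x) (b + p*y) (c + p*z) (d + p*w)
     = norm_form a b c d + p * polar_form a b c d x y z w + p^2 * norm_form x y z w"
  unfolding norm_form_def polar_form_def by (simp add: algebra_simps power2_eq_square)

lemma odd_dvd_double_imp_dvd:
  fixes p :: int
  assumes "odd p" and "p dvd 2 * x"
  shows "p dvd x"
  using assms by (simp add: coprime_dvd_mult_right_iff coprime_commute)

lemma polar_form_nondegenerate_mod: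
  fixes p :: int
  assumes "odd p" and polar_dvd: "\<And>x y z w. p dvd polar_form a b c d x y z w"
  shows "p dvd a \<and> p dvd b \<and> p dvd c \<and> p dvd d"
proof -
  define B1 B2 B3 B4 where "B1 = polar_form a b c d 1 0 0 0" and "B2 = polar_form a b c d 0 1 0 0"
    and "B3 = polar_form a b c d 0 0 1 0" and "B4 = polar_form a b c d 0 0 0 1"
  have "p dvd B1" "p dvd B2" "p dvd B3" "p dvd B4"
    unfolding B1_def B2_def B3_def B4_def by (fact polar_dvd)+
  \<comment> \<open>Twice the inverse of the Gram matrix is integral.\<close>
  moreover have "2*a = 2*B1 + B2 - B3 - B4" "2*b = B1 + 2*B2 - B3 - B4"
    "2*c = 2*B3 - B1 - B2" "2*d = 2*B4 - B1 - B2"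
    unfolding B1_def B2_def B3_def B4_def polar_form_def by simp_all
  ultimately have "p dvd 2*a" "p dvd 2*b" "p dvd 2*c" "p dvd 2*d"
    by (metis dvd_add dvd_diff dvd_mult)+
  then show ?thesis
    using odd_dvd_double_imp_dvd[OF \<open>odd p\<close>] by blast
qed

lemma norm_form_exists_lift_not_dvd_square:
  fixes p :: int
  assumes "odd p" and "p dvd norm_form a b c d"
    and nonzero_mod: "\<not> (p dvd a \<and> p dvd b \<and> p dvd c \<and> p dvd d)"
  shows "\<exists>x y z w. p dvd norm_form (a + p*x) (b + p*y) (c + p*z) (d + p*w)
                 \<and> \<not> p^2 dvd norm_form (a + p*x) (b + p*y) (c + p*z) (d + p*w)"
proof (cases "p^2 dvd norm_form a b c d")
  case False
  then show ?thesis
    using \<open>p dvd norm_form a b c d\<close> by (intro exI[of _ 0]) simp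
next
  case True
  obtain x y z w where polar: "\<not> p dvd polar_form a b c d x y z w"
    using polar_form_nondegenerate_mod[OF \<open>odd p\<close>] nonzero_mod by blast
  have "p \<noteq> 0"
    using \<open>odd p\<close> by auto
  then have "\<not> p^2 dvd p * polar_form a b c d x y z w"
    using polar by (simp add: power2_eq_square)
  moreover have "norm_form (a + p*x) (b + p*y) (c + p*z) (d + p*w)
      = (norm_form a b c d + p^2 * norm_form x y z w) + p * polar_form a b c d x y z w"
    by (simp add: norm_form_add_smult)
  moreover have "p^2 dvd norm_form a b c d + p^2 * norm_form x y z w"
    using True by simp
  ultimately have "\<not> p^2 dvd norm_form (a + p*x) (b + p*y) (c + p*z) (d + p*w)"
    by (simp add: dvd_add_right_iff)
  moreover have "p dvd norm_form (a + p*x) (b + p*y) (c + p*z) (d + p*w)"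
    using \<open>p dvd norm_form a b c d\<close> by (simp add: norm_form_add_smult power2_eq_square)
  ultimately show ?thesis
    by blast
qed

lemma qnorm_hcomb: "qnorm (hcomb a b c d) = qreal (of_int (norm_form a b c d))"
  using real_sqrt_mult_self[of 2]
  unfolding qnorm_def hcomb_def qadd_def qscale_def v1_def v2_def v3_def v4_def qmult_def
    qcnj_def qreal_def norm_form_def
  by (simp add: algebra_simps power2_eq_square)

lemma norm_cong0_hcomb_iff: "norm_cong0 (hcomb a b c d) m \<longleftrightarrow> m dvd norm_form a b c d"
  unfolding norm_cong0_def qnorm_hcomb qreal_def dvd_def
  by (auto simp del: of_int_mult simp add: of_int_eq_iff[symmetric] of_int_mult[symmetric])

lemma qsub_hcomb:
  "qsub (hcomb a b c d) (hcomb a' b' c' d') = hcomb (a - a') (b - b') (c - c') (d - d')"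
  unfolding qsub_def hcomb_def qadd_def qscale_def by (simp add: algebra_simps)

lemma qscale_hcomb: "qscale (of_int p) (hcomb a b c d) = hcomb (p*a) (p*b) (p*c) (p*d)"
  unfolding hcomb_def qadd_def qscale_def by (simp add: algebra_simps)

lemma hcomb_in_H122 [simp]: "hcomb a b c d \<in> H122"
  unfolding H122_def by blast

theorem lemma39:
  fixes p :: int and f :: quat
  assumes "prime p" and "p \<noteq> 2"
    and "f \<in> H122" and "primitive_to p f"
    and "norm_cong0 f p"
  shows "\<exists>fh \<in> H122. (\<exists>h \<in> H122. qsub fh f = qscale (of_int p) h)
            \<and> norm_cong0 fh p \<and> \<not> norm_cong0 fh (p^2)"
proof -
  obtain a b c d where f: "f = hcomb a b c d" and gcd: "gcd a (gcd b (gcd c (gcd d p))) = 1"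
    using \<open>primitive_to p f\<close> unfolding primitive_to_def by metis
  have "p > 2"
    using prime_ge_2_int[OF \<open>prime p\<close>] \<open>p \<noteq> 2\<close> by linarith
  then have "odd p"
    using \<open>prime p\<close> prime_odd_int by blast
  moreover have "p dvd norm_form a b c d"
    using \<open>norm_cong0 f p\<close> by (simp add: f norm_cong0_hcomb_iff)
  moreover have "\<not> (p dvd a \<and> p dvd b \<and> p dvd c \<and> p dvd d)"
  proof
    assume "p dvd a \<and> p dvd b \<and> p dvd c \<and> p dvd d"
    then have "p dvd gcd a (gcd b (gcd c (gcd d p)))"
      by simp
    then show False
      using gcd \<open>prime p\<close> by (simp add: not_prime_unit)
  qed
  ultimately obtain x y z w
    where "p dvd norm_form (a + p*x) (b + p*y) (c + p*z) (d + p*w)"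
      and "\<not> p^2 dvd norm_form (a + p*x) (b + p*y) (c + p*z) (d + p*w)"
    using norm_form_exists_lift_not_dvd_square by blast
  moreover have "qsub (hcomb (a + p*x) (b + p*y) (c + p*z) (d + p*w)) f
      = qscale (of_int p) (hcomb x y z w)"
    by (simp add: f qsub_hcomb qscale_hcomb)
  ultimately show ?thesis
    by (metis hcomb_in_H122 norm_cong0_hcomb_iff)
qed

end
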